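(* Let $M$ be a model with borders, let $M^s$ be its submodel of separated points, and let $r:\mathcal U(M^s)\to\mathcal U(M)$ be the map \[ r(V)=\{x\in M \mid \forall y\ge x\ (y\in M^s \Rightarrow y\in V)\} \] (the upper adjoint of the restriction map $q:\mathcal U(M)\to\mathcal U(M^s)$, $q(W)=W\cap M^s$). Then $r$ preserves binary meets and Heyting implication, and for every $(\wedge,\to)$-formula $\varphi$ we have $v(\varphi)=r(v^s(\varphi))$; that is, for every $x\in M$, \[ M,x\models\varphi \iff \forall y\ge x\ \big(y\in M^s \Rightarrow M^s,y\models\varphi\big). \]
   Context: Fix $n\ge1$ and variables $p_1,\dots,p_n$; $2^n=\{0,1\}^n$ with componentwise order. A model is $(M,\le,c)$, $(M,\le)$ a poset, $c:M\to 2^n$ order-preserving, with intuitionistic Kripke semantics ($x\models p_i$ iff $c(x)_i=1$; $x\models\varphi\to\psi$ iff every $y\ge x$ satisfying $\varphi$ satisfies $\psi$; etc.). $\mathcal U(X)$ denotes the Heyting algebra of up-sets of a poset $X$. $v(\varphi)$ is the set of points of $M$ satisfying $\varphi$. A $(\wedge,\to)$-formula uses only $\wedge$ and $\to$. A point $x$ is a $q$-border point if $x\not\models q$ and all $y>x$ satisfy $q$; $x$ is separated if it is a $q$-border point for some variable $q$. $M^s$ is the set of separated points with the restricted order and colouring, regarded as a model in its own right (satisfaction in $M^s$ computed w.r.t. its own order); $v^s(\varphi)$ is the set of points of $M^s$ satisfying $\varphi$ in $M^s$. $M$ has borders if for every variable $p$ and every $x\in M$ with $x\not\models p$ there is a $p$-border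 point $y\ge x$. *)

theory Defs
  imports Main
begin

datatype form = Var nat | Bot | Conj form form | Disj form form | Impl form form

fun vars :: "form \<Rightarrow> nat set" where
  "vars (Var i) = {i}"
| "vars Bot = {}"
| "vars (Conj a b) = vars a \<union> vars b"
| "vars (Disj a b) = vars a \<union> vars b"
| "vars (Impl a b) = vars a \<union> vars b"

fun conj_impl :: "form \<Rightarrow> bool" where
  "conj_impl (Var i) = True"
| "conj_impl Bot = False"
| "conj_impl (Conj a b) = (conj_impl a \<and> conj_impl b)"
| "conj_impl (Disj a b) = False"
| "conj_impl (Impl a b) = (conj_impl a \<and> conj_impl b)"

definition poset :: "'a set \<Rightarrow> ('a \<Rightarrow> 'a \<Rightarrow> bool) \<Rightarrow> bool" where
  "poset M le \<longleftrightarrow> (\<forall>x\<in>M. le x x)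
     \<and> (\<forall>x\<in>M. \<forall>y\<in>M. \<forall>z\<in>M. le x y \<longrightarrow> le y z \<longrightarrow> le x z)
     \<and> (\<forall>x\<in>M. \<forall>y\<in>M. le x y \<longrightarrow> le y x \<longrightarrow> x = y)"

text \<open>A model (M, le, c) with n variables: c x i is the i-th bit of the colour of x (i < n);
  c is order preserving into 2^n with componentwise order.\<close>
definition model :: "nat \<Rightarrow> 'a set \<Rightarrow> ('a \<Rightarrow> 'a \<Rightarrow> bool) \<Rightarrow> ('a \<Rightarrow> nat \<Rightarrow> bool) \<Rightarrow> bool" where
  "model n M le c \<longleftrightarrow> poset M le
     \<and> (\<forall>x\<in>M. \<forall>y\<in>M. \<forall>i<n. le x y \<longrightarrow> c x i \<longrightarrow> c y i)"

fun sat :: "'a set \<Rightarrow> ('a \<Rightarrow> 'a \<Rightarrow> bool) \<Rightarrow> ('a \<Rightarrow> nat \<Rightarrow> bool) \<Rightarrow> 'a \<Rightarrow> form \<Rightarrow> bool" where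
  "sat M le c x (Var i) = c x i"
| "sat M le c x Bot = False"
| "sat M le c x (Conj a b) = (sat M le c x a \<and> sat M le c x b)"
| "sat M le c x (Disj a b) = (sat M le c x a \<or> sat M le c x b)"
| "sat M le c x (Impl a b) =
     (\<forall>y\<in>M. le x y \<longrightarrow> sat M le c y a \<longrightarrow> sat M le c y b)"

definition val :: "'a set \<Rightarrow> ('a \<Rightarrow> 'a \<Rightarrow> bool) \<Rightarrow> ('a \<Rightarrow> nat \<Rightarrow> bool) \<Rightarrow> form \<Rightarrow> 'a set" where
  "val M le c \<phi> = {x\<in>M. sat M le c x \<phi>}"

definition border_point :: "'a set \<Rightarrow> ('a \<Rightarrow> 'a \<Rightarrow> bool) \<Rightarrow> ('a \<Rightarrow> nat \<Rightarrow> bool) \<Rightarrow> nat \<Rightarrow> 'a \<Rightarrow> bool" where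
  "border_point M le c i x \<longleftrightarrow> x \<in> M \<and> \<not> c x i \<and> (\<forall>y\<in>M. le x y \<and> y \<noteq> x \<longrightarrow> c y i)"

definition separated_points :: "nat \<Rightarrow> 'a set \<Rightarrow> ('a \<Rightarrow> 'a \<Rightarrow> bool) \<Rightarrow> ('a \<Rightarrow> nat \<Rightarrow> bool) \<Rightarrow> 'a set" where
  "separated_points n M le c = {x\<in>M. \<exists>i<n. border_point M le c i x}"

definition has_borders :: "nat \<Rightarrow> 'a set \<Rightarrow> ('a \<Rightarrow> 'a \<Rightarrow> bool) \<Rightarrow> ('a \<Rightarrow> nat \<Rightarrow> bool) \<Rightarrow> bool" where
  "has_borders n M le c \<longleftrightarrow>
     (\<forall>i<n. \<forall>x\<in>M. \<not> c x i \<longrightarrow> (\<exists>y\<in>M. le x y \<and> border_point M le c i y))"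

definition upsets :: "'a set \<Rightarrow> ('a \<Rightarrow> 'a \<Rightarrow> bool) \<Rightarrow> 'a set set" where
  "upsets M le = {V. V \<subseteq> M \<and> (\<forall>x\<in>V. \<forall>y\<in>M. le x y \<longrightarrow> y \<in> V)}"

definition heyting_imp :: "'a set \<Rightarrow> ('a \<Rightarrow> 'a \<Rightarrow> bool) \<Rightarrow> 'a set \<Rightarrow> 'a set \<Rightarrow> 'a set" where
  "heyting_imp M le V W = {x\<in>M. \<forall>y\<in>M. le x y \<longrightarrow> y \<in> V \<longrightarrow> y \<in> W}"

definition rmap :: "'a set \<Rightarrow> ('a \<Rightarrow> 'a \<Rightarrow> bool) \<Rightarrow> 'a set \<Rightarrow> 'a set \<Rightarrow> 'a set" where
  "rmap M le Ms V = {x\<in>M. \<forall>y\<in>M. le x y \<longrightarrow> y \<in> Ms \<longrightarrow> y \<in> V}"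

end

theory Submission
  imports Defs
begin

text \<open>The valuation map v is a homomorphism of (\<and>,\<rightarrow>)-algebras into U(M), and so is v^s into U(M^s).
  Since r preserves meets and Heyting implications, the two homomorphisms v and r \<circ> v^s agree
  on all (\<and>,\<rightarrow>)-formulas as soon as they agree on variables. For a variable p this is where
  borders are needed: if x \<notin> v(p), some p-border point above x is a separated point refuting p.\<close>

lemma model_subset:
  assumes "model n M le c" and "S \<subseteq> M"
  shows "model n S le c"
  using assms unfolding model_def poset_def by blast

lemma separated_points_subset: "separated_points n M le c \<subseteq> M"
  unfolding separated_points_def by blast

lemma sat_persistent:
  assumes "model n M le c" and "vars \<phi> \<subseteq> {..<n}"
    and "x \<in> M" and "y \<in> M" and "le x y" and "sat M le c x \<phi>"
  shows "sat M le c y \<phi>"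
  using assms(2-)
proof (induction \<phi> arbitrary: x y)
  case (Var i)
  then show ?case using assms(1) unfolding model_def by auto
next
  case (Impl a b)
  have "\<forall>x\<in>M. \<forall>y\<in>M. \<forall>z\<in>M. le x y \<longrightarrow> le y z \<longrightarrow> le x z"
    using assms(1) unfolding model_def poset_def by blast
  with Impl.prems show ?case by (metis sat.simps(5))
qed auto

lemma val_upset:
  assumes "model n M le c" and "vars \<phi> \<subseteq> {..<n}"
  shows "val M le c \<phi> \<in> upsets M le"
  using sat_persistent[OF assms] unfolding val_def upsets_def by blast

lemma val_Conj: "val M le c (Conj a b) = val M le c a \<inter> val M le c b"
  unfolding val_def by auto

lemma val_Impl: "val M le c (Impl a b) = heyting_imp M le (val M le c a) (val M le c b)"
  unfolding val_def heyting_imp_def by auto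

lemma rmap_upset:
  assumes "poset M le"
  shows "rmap M le Ms V \<in> upsets M le"
  using assms unfolding rmap_def upsets_def poset_def by blast

lemma rmap_Int: "rmap M le Ms (V \<inter> W) = rmap M le Ms V \<inter> rmap M le Ms W"
  unfolding rmap_def by blast

lemma rmap_restrict:
  assumes "poset M le" and "z \<in> Ms" and "z \<in> rmap M le Ms V"
  shows "z \<in> V"
  using assms unfolding rmap_def poset_def by blast

lemma upset_in_rmap:
  assumes "poset M le" and "Ms \<subseteq> M" and "V \<in> upsets Ms le" and "z \<in> V"
  shows "z \<in> rmap M le Ms V"
  using assms unfolding rmap_def upsets_def by blast

lemma rmap_heyting_imp:
  assumes P: "poset M le" and sub: "Ms \<subseteq> M" and V: "V \<in> upsets Ms le"
  shows "rmap M le Ms (heyting_imp Ms le V W) = heyting_imp M le (rmap M le Ms V) (rmap M le Ms W)"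
proof (rule set_eqI, rule iffI)
  have trans: "\<And>x y z. x \<in> M \<Longrightarrow> y \<in> M \<Longrightarrow> z \<in> M \<Longrightarrow> le x y \<Longrightarrow> le y z \<Longrightarrow> le x z"
    using P unfolding poset_def by blast
  fix x
  {
    assume x: "x \<in> rmap M le Ms (heyting_imp Ms le V W)"
    have xM: "x \<in> M" using x unfolding rmap_def by blast
    have "y \<in> rmap M le Ms W" if y: "y \<in> M" "le x y" "y \<in> rmap M le Ms V" for y
      unfolding rmap_def
    proof (intro CollectI conjI ballI impI y(1))
      fix z assume z: "z \<in> M" "le y z" "z \<in> Ms"
      have xz: "le x z" using trans[OF xM y(1) z(1) y(2) z(2)] .
      have "z \<in> heyting_imp Ms le V W" using x z xz unfolding rmap_def by blast
      moreover have "z \<in> V" using y(3) z unfolding rmap_def by blast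
      moreover have "le z z" using P z(1) unfolding poset_def by blast
      ultimately show "z \<in> W" using z(3) unfolding heyting_imp_def by blast
    qed
    then show "x \<in> heyting_imp M le (rmap M le Ms V) (rmap M le Ms W)"
      using xM unfolding heyting_imp_def by blast
  next
    assume x: "x \<in> heyting_imp M le (rmap M le Ms V) (rmap M le Ms W)"
    have xM: "x \<in> M" using x unfolding heyting_imp_def by blast
    have "z \<in> W" if y: "y \<in> M" "le x y" "y \<in> Ms" and z: "z \<in> Ms" "le y z" "z \<in> V" for y z
    proof -
      have zM: "z \<in> M" using z(1) sub by blast
      have xz: "le x z" using trans[OF xM y(1) zM y(2) z(2)] .
      have "z \<in> rmap M le Ms V" using upset_in_rmap[OF P sub V z(3)] .
      then have "z \<in> rmap M le Ms W" using x zM xz unfolding heyting_imp_def by blast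
      then show "z \<in> W" using rmap_restrict[OF P z(1)] by blast
    qed
    then show "x \<in> rmap M le Ms (heyting_imp Ms le V W)"
      using xM sub unfolding heyting_imp_def rmap_def by blast
  }
qed

lemma val_Var_eq_rmap:
  assumes "model n M le c" and "has_borders n M le c" and "i < n"
  defines "Ms \<equiv> separated_points n M le c"
  shows "val M le c (Var i) = rmap M le Ms (val Ms le c (Var i))"
proof (rule set_eqI, rule iffI)
  fix x assume "x \<in> val M le c (Var i)"
  then show "x \<in> rmap M le Ms (val Ms le c (Var i))"
    using assms(1,3) separated_points_subset[of n M le c]
    unfolding val_def rmap_def model_def Ms_def by auto
next
  fix x assume "x \<in> rmap M le Ms (val Ms le c (Var i))"
  then have x: "x \<in> M" and above: "\<forall>y\<in>M. le x y \<longrightarrow> y \<in> Ms \<longrightarrow> c y i"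
    unfolding rmap_def val_def by auto
  show "x \<in> val M le c (Var i)"
  proof (rule ccontr)
    assume "x \<notin> val M le c (Var i)"
    then have "\<not> c x i" using x unfolding val_def by simp
    then obtain y where y: "y \<in> M" "le x y" "border_point M le c i y"
      using assms(2,3) x unfolding has_borders_def by blast
    then have "y \<in> Ms" using assms(3) unfolding Ms_def separated_points_def by blast
    with y above have "c y i" by blast
    with y(3) show False unfolding border_point_def by blast
  qed
qed

lemma val_eq_rmap_val:
  assumes "model n M le c" and "has_borders n M le c"
    and "conj_impl \<phi>" and "vars \<phi> \<subseteq> {..<n}"
  defines "Ms \<equiv> separated_points n M le c"
  shows "val M le c \<phi> = rmap M le Ms (val Ms le c \<phi>)"
  using assms(3,4)
proof (induction \<phi>)
  case (Var i)
  then show ?case using val_Var_eq_rmap[OF assms(1,2)] unfolding Ms_def by simp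
next
  case (Conj a b)
  then show ?case by (simp add: val_Conj rmap_Int)
next
  case (Impl a b)
  have P: "poset M le" using assms(1) unfolding model_def by blast
  have sub: "Ms \<subseteq> M" unfolding Ms_def by (rule separated_points_subset)
  have "val Ms le c a \<in> upsets Ms le"
    using val_upset[OF model_subset[OF assms(1) sub]] Impl.prems by simp
  then have "rmap M le Ms (val Ms le c (Impl a b))
      = heyting_imp M le (rmap M le Ms (val Ms le c a)) (rmap M le Ms (val Ms le c b))"
    unfolding val_Impl by (rule rmap_heyting_imp[OF P sub])
  with Impl show ?case by (simp add: val_Impl)
qed auto

theorem lemma3p10:
  fixes n :: nat and M :: "'a set" and le :: "'a \<Rightarrow> 'a \<Rightarrow> bool" and c :: "'a \<Rightarrow> nat \<Rightarrow> bool"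
  assumes "n \<ge> 1"
    and "model n M le c"
    and "has_borders n M le c"
  defines "Ms \<equiv> separated_points n M le c"
  shows "(\<forall>V\<in>upsets Ms le. rmap M le Ms V \<in> upsets M le)
    \<and> (\<forall>V\<in>upsets Ms le. \<forall>W\<in>upsets Ms le.
          rmap M le Ms (V \<inter> W) = rmap M le Ms V \<inter> rmap M le Ms W)
    \<and> (\<forall>V\<in>upsets Ms le. \<forall>W\<in>upsets Ms le.
          rmap M le Ms (heyting_imp Ms le V W)
            = heyting_imp M le (rmap M le Ms V) (rmap M le Ms W))
    \<and> (\<forall>\<phi>. conj_impl \<phi> \<and> vars \<phi> \<subseteq> {..<n} \<longrightarrow>
          val M le c \<phi> = rmap M le Ms (val Ms le c \<phi>)
          \<and> (\<forall>x\<in>M. sat M le c x \<phi> \<longleftrightarrow>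
                (\<forall>y\<in>M. le x y \<longrightarrow> y \<in> Ms \<longrightarrow> sat Ms le c y \<phi>)))"
proof -
  have P: "poset M le" using assms(2) unfolding model_def by blast
  have sub: "Ms \<subseteq> M" unfolding Ms_def by (rule separated_points_subset)
  have "val M le c \<phi> = rmap M le Ms (val Ms le c \<phi>)
        \<and> (\<forall>x\<in>M. sat M le c x \<phi> \<longleftrightarrow> (\<forall>y\<in>M. le x y \<longrightarrow> y \<in> Ms \<longrightarrow> sat Ms le c y \<phi>))"
    if "conj_impl \<phi>" "vars \<phi> \<subseteq> {..<n}" for \<phi>
  proof
    show eq: "val M le c \<phi> = rmap M le Ms (val Ms le c \<phi>)"
      using val_eq_rmap_val[OF assms(2,3) that] unfolding Ms_def .
    show "\<forall>x\<in>M. sat M le c x \<phi> \<longleftrightarrow> (\<forall>y\<in>M. le x y \<longrightarrow> y \<in> Ms \<longrightarrow> sat Ms le c y \<phi>)"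
    proof
      fix x assume "x \<in> M"
      then have "sat M le c x \<phi> \<longleftrightarrow> x \<in> rmap M le Ms (val Ms le c \<phi>)"
        using eq unfolding val_def by blast
      also have "\<dots> \<longleftrightarrow> (\<forall>y\<in>M. le x y \<longrightarrow> y \<in> Ms \<longrightarrow> sat Ms le c y \<phi>)"
        using \<open>x \<in> M\<close> unfolding rmap_def val_def by blast
      finally show "sat M le c x \<phi> \<longleftrightarrow> (\<forall>y\<in>M. le x y \<longrightarrow> y \<in> Ms \<longrightarrow> sat Ms le c y \<phi>)" .
    qed
  qed
  then show ?thesis
    by (simp add: rmap_upset[OF P] rmap_Int rmap_heyting_imp[OF P sub])
qed

end
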